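(* Assume there are finitely many ap-basic classes in $M_1$, namely $K_1,\dots,K_v$, all closed. (a) For every sufficiently small $\theta>0$ there is $\delta(\theta)\in(0,\theta)$ with the following property. Suppose there exist indices $i,i'\in\{1,\dots,v\}$ and an ap $\delta(\theta)$-pseudoorbit $(\xi_0,\dots,\xi_n)$ such that $d(\xi_0,K_i)<\delta(\theta)$, $d(\xi_n,K_{i'})<\delta(\theta)$, and $d(\xi_j,K_i)>\theta$ for some $j\in\{1,\dots,n\}$. Then $i\ne i'$ and $K_i<_{ap}K_{i'}$. (b) For every $\delta'>0$ there exist $\delta\in(0,\delta')$ and $n_0\ge1$ such that every ap $\delta$-pseudoorbit of length greater than $n_0$ passes through $N^{\delta'}(\mathcal{R}_{ap})$.
   Context: Let $M\subset\mathbb{R}^d$ be closed. Let $F:M\to M$ be continuous with $\sup_{x\in M}\|F(x)\|<\infty$. Let $d(x,y)=\max_i|x_i-y_i|$, $d(x,A)=\inf_{y\in A}d(x,y)$, and $N^\delta(A)=\{x\in M:\inf_{y\in A}\|x-y\|<\delta\}$. Suppose $M=M_0\cup M_1$ (disjoint) with $M_0$ closed, $F(M_0)\subseteq M_0$ and $F(M_1)\subseteq M_1$. ap-chain recurrence. For $\delta>0$, an ap $\delta$-pseudoorbit joining $x$ to $y$ is a tuple $(\xi_0,\dots,\xi_n)\in M^{n+1}$, $n\ge1$, with: - $\xi_0=x$ and $\xi_n=y$; - $\xi_i\in M_0\Rightarrow\xi_{i+1}\in M_0$; - $d(\xi_{i+1},F(\xi_i))<\delta$ for all $i$. Its length is $n$.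 Write $x<_{ap}y$ if for every $\delta>0$ such a pseudoorbit exists, and $x\sim_{ap}y$ if both directions hold. Let $\mathcal{R}_{ap}=\{x:x\sim_{ap}x\}$. The ap-basic classes are the equivalence classes of $\sim_{ap}$ on $\mathcal{R}_{ap}$. For classes, $K<_{ap}K'$ means $x<_{ap}y$ for $x\in K$, $y\in K'$. *)

theory Defs
  imports "HOL-Analysis.Analysis"
begin

definition dmax :: "real^'n \<Rightarrow> real^'n \<Rightarrow> real" where
  "dmax x y = Max (range (\<lambda>i. \<bar>x$i - y$i\<bar>))"

definition dset :: "real^'n \<Rightarrow> (real^'n) set \<Rightarrow> real" where
  "dset x A = Inf ((\<lambda>y. dmax x y) ` A)"

definition nbhd :: "(real^'n) set \<Rightarrow> real \<Rightarrow> (real^'n) set \<Rightarrow> (real^'n) set" where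
  "nbhd M \<delta> A = {x \<in> M. \<exists>y\<in>A. norm (x - y) < \<delta>}"

definition ap_pseudoorbit ::
  "(real^'n) set \<Rightarrow> (real^'n) set \<Rightarrow> (real^'n \<Rightarrow> real^'n) \<Rightarrow> real \<Rightarrow> (nat \<Rightarrow> real^'n) \<Rightarrow> nat \<Rightarrow> bool" where
  "ap_pseudoorbit M M0 F \<delta> \<xi> n \<longleftrightarrow> 1 \<le> n \<and> (\<forall>i\<le>n. \<xi> i \<in> M)
     \<and> (\<forall>i<n. \<xi> i \<in> M0 \<longrightarrow> \<xi> (Suc i) \<in> M0)
     \<and> (\<forall>i<n. dmax (\<xi> (Suc i)) (F (\<xi> i)) < \<delta>)"

definition ap_less ::
  "(real^'n) set \<Rightarrow> (real^'n) set \<Rightarrow> (real^'n \<Rightarrow> real^'n) \<Rightarrow> real^'n \<Rightarrow> real^'n \<Rightarrow> bool" where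
  "ap_less M M0 F x y \<longleftrightarrow> (\<forall>\<delta>>0. \<exists>\<xi> n. ap_pseudoorbit M M0 F \<delta> \<xi> n \<and> \<xi> 0 = x \<and> \<xi> n = y)"

definition ap_equiv ::
  "(real^'n) set \<Rightarrow> (real^'n) set \<Rightarrow> (real^'n \<Rightarrow> real^'n) \<Rightarrow> real^'n \<Rightarrow> real^'n \<Rightarrow> bool" where
  "ap_equiv M M0 F x y \<longleftrightarrow> ap_less M M0 F x y \<and> ap_less M M0 F y x"

definition R_ap :: "(real^'n) set \<Rightarrow> (real^'n) set \<Rightarrow> (real^'n \<Rightarrow> real^'n) \<Rightarrow> (real^'n) set" where
  "R_ap M M0 F = {x \<in> M. ap_equiv M M0 F x x}"

definition ap_basic_class ::
  "(real^'n) set \<Rightarrow> (real^'n) set \<Rightarrow> (real^'n \<Rightarrow> real^'n) \<Rightarrow> (real^'n) set \<Rightarrow> bool" where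
  "ap_basic_class M M0 F K \<longleftrightarrow>
     (\<exists>x\<in>R_ap M M0 F. K = {y \<in> R_ap M M0 F. ap_equiv M M0 F x y})"

definition class_less ::
  "(real^'n) set \<Rightarrow> (real^'n) set \<Rightarrow> (real^'n \<Rightarrow> real^'n) \<Rightarrow> (real^'n) set \<Rightarrow> (real^'n) set \<Rightarrow> bool" where
  "class_less M M0 F K K' \<longleftrightarrow> (\<forall>x\<in>K. \<forall>y\<in>K'. ap_less M M0 F x y)"

end

theory Submission
  imports Defs
begin

text \<open>
  Both parts are proved by contradiction, by producing pseudoorbits whose
  precision \<open>\<delta>\<^sub>k\<close> tends to 0 and passing to convergent subsequences (all pseudoorbit
  points after the first lie near the bounded set \<open>F(M)\<close>).  After elementary facts on
  \<open>dmax\<close>, \<open>dset\<close> and on cutting, gluing and perturbing pseudoorbits, the locale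
  \<open>ap_dynamics\<close> provides the key limit principle: if segments of such pseudoorbits
  start near \<open>x\<close> and end near \<open>y\<close>, then \<open>x <\<^sub>a\<^sub>p y\<close>.  Consequently every nonempty compact
  invariant set contains an ap-recurrent point, which gives (b): long pseudoorbits avoiding
  \<open>N\<^sup>\<delta>'(R\<^sub>a\<^sub>p)\<close> would shadow an orbit in a compact set disjoint from \<open>R\<^sub>a\<^sub>p\<close>.  In the locale
  \<open>ap_split_dynamics\<close> the finitely many compact classes in \<open>M\<^sub>1\<close> keep a uniform distance
  \<open>\<theta>\<^sub>0\<close> from \<open>M\<^sub>0\<close>; limits of pseudoorbits from \<open>K\<close> to \<open>K'\<close> give \<open>K <\<^sub>a\<^sub>p K'\<close>, and an
  excursion out of the \<open>\<theta>\<close>-neighbourhood of \<open>K\<close> yields a point \<open>y \<notin> K\<close> with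
  \<open>K <\<^sub>a\<^sub>p y <\<^sub>a\<^sub>p K'\<close>, so \<open>K' \<noteq> K\<close>.
\<close>

subsection \<open>The max metric and the distance to a set\<close>

lemma dmax_ge: "\<bar>x$i - y$i\<bar> \<le> dmax x y"
  unfolding dmax_def by (rule Max_ge) auto

lemma dmax_le: "(\<And>i. \<bar>x$i - y$i\<bar> \<le> a) \<Longrightarrow> dmax x y \<le> a"
  unfolding dmax_def by (rule Max.boundedI) auto

lemma dmax_nonneg: "0 \<le> dmax x y"
  by (rule order_trans[OF _ dmax_ge]) auto

lemma dmax_self: "dmax x x = 0"
  by (intro antisym dmax_le dmax_nonneg) auto

lemma dmax_sym: "dmax x y = dmax y x"
  by (intro antisym dmax_le) (auto simp: abs_minus_commute intro: order_trans[OF _ dmax_ge])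

lemma dmax_triangle: "dmax x z \<le> dmax x y + dmax y z"
proof (rule dmax_le)
  fix i
  have "\<bar>x$i - z$i\<bar> \<le> \<bar>x$i - y$i\<bar> + \<bar>y$i - z$i\<bar>" by linarith
  also have "\<dots> \<le> dmax x y + dmax y z" by (intro add_mono dmax_ge)
  finally show "\<bar>x$i - z$i\<bar> \<le> dmax x y + dmax y z" .
qed

lemma dmax_le_norm: "dmax x y \<le> norm (x - y)"
  by (rule dmax_le) (metis component_le_norm_cart vector_minus_component)

lemma norm_le_dmax: "norm (x - y) \<le> real CARD('n) * dmax x (y::real^'n)"
proof -
  have "norm (x - y) \<le> (\<Sum>i\<in>UNIV. \<bar>(x-y)$i\<bar>)" by (rule norm_le_l1_cart)
  also have "\<dots> \<le> (\<Sum>i\<in>(UNIV::'n set). dmax x y)"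
    by (intro sum_mono) (simp add: dmax_ge)
  finally show ?thesis by simp
qed

lemma norm_le_of_dmax_less:
  "dmax x y < \<delta> \<Longrightarrow> norm (x - y) \<le> real CARD('n) * (\<delta>::real)" for x y :: "real^'n"
  using norm_le_dmax[of x y] by (smt (verit) mult_left_mono of_nat_0_le_iff)

lemma tendsto_of_dmax_close:
  fixes a b :: "nat \<Rightarrow> real^'n"
  assumes "b \<longlonglongrightarrow> l" "e \<longlonglongrightarrow> 0" "eventually (\<lambda>k. dmax (a k) (b k) \<le> e k) sequentially"
  shows "a \<longlonglongrightarrow> l"
proof -
  have "eventually (\<lambda>k. norm (a k - b k) \<le> real CARD('n) * e k) sequentially"
    using assms(3) by eventually_elim (metis norm_le_dmax mult_left_mono of_nat_0_le_iff order_trans)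
  moreover have "(\<lambda>k. real CARD('n) * e k) \<longlonglongrightarrow> 0"
    by (rule tendsto_mult_right_zero[OF assms(2)])
  ultimately have "(\<lambda>k. a k - b k) \<longlonglongrightarrow> 0"
    by (rule Lim_null_comparison)
  from tendsto_add[OF this assms(1)] show ?thesis by simp
qed

lemma dset_lower: "q \<in> K \<Longrightarrow> dset p K \<le> dmax p q"
  unfolding dset_def by (rule cInf_lower) (auto intro: bdd_belowI[where m=0] dmax_nonneg)

lemma dset_greatest: "K \<noteq> {} \<Longrightarrow> (\<And>q. q \<in> K \<Longrightarrow> a \<le> dmax p q) \<Longrightarrow> a \<le> dset p K"
  unfolding dset_def by (rule cInf_greatest) auto

lemma dset_lessD: "K \<noteq> {} \<Longrightarrow> dset p K < a \<Longrightarrow> \<exists>q\<in>K. dmax p q < a"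
  unfolding dset_def by (drule cInf_lessD[rotated]) auto

lemma dset_nonneg: "K \<noteq> {} \<Longrightarrow> 0 \<le> dset p K"
  by (rule dset_greatest) (auto simp: dmax_nonneg)

lemma dset_mem: "q \<in> K \<Longrightarrow> dset q K = 0"
  using dset_lower[of q K q] dset_nonneg[of K q] by (auto simp: dmax_self)

lemma dset_lip:
  assumes "K \<noteq> {}"
  shows "dset p K \<le> dmax p p' + dset p' K"
proof -
  have "dset p K - dmax p p' \<le> dset p' K"
  proof (rule dset_greatest[OF assms])
    fix q assume "q \<in> K"
    then have "dset p K \<le> dmax p q" by (rule dset_lower)
    also have "\<dots> \<le> dmax p p' + dmax p' q" by (rule dmax_triangle)
    finally show "dset p K - dmax p p' \<le> dmax p' q" by simp
  qed
  then show ?thesis by simp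
qed

lemma tendsto_dset:
  assumes "K \<noteq> {}" "f \<longlonglongrightarrow> z"
  shows "(\<lambda>k. dset (f k) K) \<longlonglongrightarrow> dset z K"
proof -
  have bound: "norm (dset (f k) K - dset z K) \<le> norm (f k - z)" for k
  proof -
    have "dmax z (f k) = dmax (f k) z" by (rule dmax_sym)
    then show ?thesis
      using dset_lip[OF assms(1), of "f k" z] dset_lip[OF assms(1), of z "f k"]
        dmax_le_norm[of "f k" z] by (simp add: abs_le_iff)
  qed
  have lim: "(\<lambda>k. norm (f k - z)) \<longlonglongrightarrow> 0"
    using assms(2) by (simp add: LIM_zero_iff tendsto_norm_zero)
  have "(\<lambda>k. dset (f k) K - dset z K) \<longlonglongrightarrow> 0"
    by (rule Lim_null_comparison[OF always_eventually lim]) (use bound in auto)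
  then show ?thesis by (simp add: LIM_zero_iff)
qed

lemma bounded_dset_neighbourhood:
  fixes K :: "(real^'n) set"
  assumes "bounded K" "K \<noteq> {}"
  shows "\<exists>\<rho>. \<forall>p. dset p K \<le> \<theta> \<longrightarrow> norm p \<le> \<rho>"
proof -
  obtain \<rho> where \<rho>: "\<And>q. q \<in> K \<Longrightarrow> norm q \<le> \<rho>" using assms(1) unfolding bounded_iff by blast
  have "norm p \<le> \<rho> + real CARD('n) * (\<theta> + 1)" if "dset p K \<le> \<theta>" for p
  proof -
    have "dset p K < \<theta> + 1" using that by simp
    then obtain q where "q \<in> K" "dmax p q < \<theta> + 1" using dset_lessD[OF assms(2)] by blast
    then have "norm (p - q) \<le> real CARD('n) * (\<theta> + 1)" by (intro norm_le_of_dmax_less)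
    then show ?thesis using \<rho>[OF \<open>q \<in> K\<close>] norm_triangle_ineq2[of p q] by linarith
  qed
  then show ?thesis by blast
qed

lemma compact_dset_separated:
  fixes K A :: "(real^'n) set"
  assumes "compact K" "K \<noteq> {}" "closed A" "K \<inter> A = {}"
  shows "\<exists>e>0. \<forall>p\<in>A. e \<le> dset p K"
proof -
  obtain d where "d > 0" and d: "\<And>q p. q \<in> K \<Longrightarrow> p \<in> A \<Longrightarrow> d \<le> dist q p"
    using separate_compact_closed[OF assms(1,3,4)] by blast
  define c where "c = real CARD('n)"
  have "c > 0" unfolding c_def by simp
  have "d / c \<le> dset p K" if "p \<in> A" for p
  proof (rule dset_greatest[OF assms(2)])
    fix q assume "q \<in> K"
    have "d \<le> norm (p - q)" using d[OF \<open>q \<in> K\<close> that] by (simp add: dist_norm norm_minus_commute)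
    also have "\<dots> \<le> c * dmax p q" unfolding c_def by (rule norm_le_dmax)
    finally show "d / c \<le> dmax p q" using \<open>c > 0\<close> by (simp add: divide_le_eq mult.commute)
  qed
  then show ?thesis using \<open>d > 0\<close> \<open>c > 0\<close> by (intro exI[of _ "d / c"]) auto
qed

lemma shrinking_sequence:
  fixes c :: real
  assumes "0 < c"
  shows "0 < c / 2 * inverse (real (Suc k))" "c / 2 * inverse (real (Suc k)) < c"
    and "(\<lambda>k. c / 2 * inverse (real (Suc k))) \<longlonglongrightarrow> 0"
proof -
  show "0 < c / 2 * inverse (real (Suc k))" using assms by simp
  have "c / 2 * inverse (real (Suc k)) \<le> c / 2"
    using assms by (intro mult_left_le) (auto simp: inverse_le_1_iff)
  then show "c / 2 * inverse (real (Suc k)) < c" using assms by simp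
  show "(\<lambda>k. c / 2 * inverse (real (Suc k))) \<longlonglongrightarrow> 0"
    by (rule tendsto_mult_right_zero[OF LIMSEQ_inverse_real_of_nat])
qed

lemma first_exit_indices:
  fixes P :: "nat \<Rightarrow> nat \<Rightarrow> bool"
  assumes "\<And>k. \<not> P k 0" "\<And>k. \<exists>j\<in>{1..n k}. P k j"
  shows "\<exists>J. \<forall>k. 0 < J k \<and> J k \<le> n k \<and> P k (J k) \<and> \<not> P k (J k - 1)"
proof -
  have "\<exists>J. 0 < J \<and> J \<le> n k \<and> P k J \<and> \<not> P k (J - 1)" for k
  proof -
    obtain j where "j \<le> n k" "P k j" using assms(2)[of k] by auto
    then obtain J where "J \<le> j" "\<forall>i<J. \<not> P k i" "P k J" using ex_least_nat_le[of "P k" j] by blast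
    moreover have "0 < J" using assms(1)[of k] \<open>P k J\<close> by (cases J) auto
    ultimately show ?thesis using \<open>j \<le> n k\<close> by (intro exI[of _ J]) auto
  qed
  then show ?thesis by metis
qed

lemma subseq_constant:
  assumes "finite A" "\<And>k. f k \<in> A"
  shows "\<exists>s :: nat \<Rightarrow> nat. \<exists>a. strict_mono s \<and> (\<forall>k. f (s k) = a)"
proof -
  have "range f \<subseteq> A" using assms(2) by blast
  then have "finite (range f)" using assms(1) by (rule finite_subset)
  then obtain k0 where "infinite {k. f k = f k0}"
    using pigeonhole_infinite[of "UNIV :: nat set" f] by auto
  then obtain s :: "nat \<Rightarrow> nat" where "strict_mono s" "\<And>k. s k \<in> {k. f k = f k0}"
    using infinite_enumerate by blast
  then show ?thesis by auto
qed

lemma finite_uniform_lower_bound: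
  assumes "finite A" and "\<And>a. a \<in> A \<Longrightarrow> \<exists>e>0. \<forall>p\<in>B. e \<le> f a p"
  shows "\<exists>e>0. \<forall>a\<in>A. \<forall>p\<in>B. e \<le> (f a p :: real)"
  using assms
proof (induction A rule: finite_induct)
  case empty
  show ?case by (intro exI[of _ 1]) simp
next
  case (insert a A)
  obtain e where "e > 0" "\<forall>a\<in>A. \<forall>p\<in>B. e \<le> f a p" using insert by blast
  moreover obtain e' where "e' > 0" "\<forall>p\<in>B. e' \<le> f a p" using insert.prems by blast
  ultimately show ?case by (intro exI[of _ "min e e'"]) (auto simp: min_le_iff_disj)
qed

lemma ap_pseudoorbit_mono:
  "ap_pseudoorbit M M0 F \<delta> \<xi> n \<Longrightarrow> \<delta> \<le> \<delta>' \<Longrightarrow> ap_pseudoorbit M M0 F \<delta>' \<xi> n"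
  unfolding ap_pseudoorbit_def by force

lemma ap_pseudoorbit_stays_in_M0:
  assumes "ap_pseudoorbit M M0 F \<delta> \<xi> n" "\<xi> i \<in> M0" "i \<le> j" "j \<le> n"
  shows "\<xi> j \<in> M0"
  using assms(3,4)
proof (induction j rule: dec_induct)
  case base
  show ?case by (rule assms(2))
next
  case (step j)
  then show ?case using assms(1) unfolding ap_pseudoorbit_def by auto
qed

lemma ap_pseudoorbit_segment:
  assumes "ap_pseudoorbit M M0 F \<delta> \<xi> n" "a < b" "b \<le> n"
  shows "ap_pseudoorbit M M0 F \<delta> (\<lambda>i. \<xi> (a + i)) (b - a)"
  using assms unfolding ap_pseudoorbit_def by auto

lemma ap_pseudoorbit_append:
  assumes \<xi>: "ap_pseudoorbit M M0 F \<delta> \<xi> n" and \<eta>: "ap_pseudoorbit M M0 F \<delta> \<eta> m"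
    and join: "\<xi> n = \<eta> 0"
  shows "ap_pseudoorbit M M0 F \<delta> (\<lambda>i. if i \<le> n then \<xi> i else \<eta> (i - n)) (n + m)"
    (is "ap_pseudoorbit M M0 F \<delta> ?\<zeta> (n + m)")
proof -
  have first: "?\<zeta> i = \<xi> i" "?\<zeta> (Suc i) = \<xi> (Suc i)" if "i < n" for i
    using that by auto
  have second: "?\<zeta> i = \<eta> (i - n)" "?\<zeta> (Suc i) = \<eta> (Suc (i - n))" "i - n < m"
    if "n \<le> i" "i < n + m" for i
    using that join by (auto simp: Suc_diff_le)
  have step: "(?\<zeta> i \<in> M0 \<longrightarrow> ?\<zeta> (Suc i) \<in> M0) \<and> dmax (?\<zeta> (Suc i)) (F (?\<zeta> i)) < \<delta>"
    if "i < n + m" for i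
  proof (cases "i < n")
    case True
    then show ?thesis using \<xi> unfolding first[OF True] ap_pseudoorbit_def by blast
  next
    case False
    then have "n \<le> i" by simp
    then show ?thesis using \<eta> that unfolding second[OF \<open>n \<le> i\<close> that] ap_pseudoorbit_def
      by (metis second(3)[OF \<open>n \<le> i\<close> that])
  qed
  moreover have "?\<zeta> i \<in> M" if "i \<le> n + m" for i
    using that \<xi> \<eta> unfolding ap_pseudoorbit_def by auto
  moreover have "1 \<le> n + m" using \<xi> unfolding ap_pseudoorbit_def by simp
  ultimately show ?thesis unfolding ap_pseudoorbit_def by blast
qed

lemma ap_less_trans:
  assumes "ap_less M M0 F x y" "ap_less M M0 F y z"
  shows "ap_less M M0 F x z"
  unfolding ap_less_def
proof (intro allI impI)
  fix \<delta> :: real assume "\<delta> > 0"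
  then obtain \<xi> n \<eta> m where "ap_pseudoorbit M M0 F \<delta> \<xi> n" "\<xi> 0 = x" "\<xi> n = y"
    and "ap_pseudoorbit M M0 F \<delta> \<eta> m" "\<eta> 0 = y" "\<eta> m = z"
    using assms unfolding ap_less_def by meson
  with ap_pseudoorbit_append[of M M0 F \<delta> \<xi> n \<eta> m]
  show "\<exists>\<zeta> k. ap_pseudoorbit M M0 F \<delta> \<zeta> k \<and> \<zeta> 0 = x \<and> \<zeta> k = z"
    by (intro exI[of _ "\<lambda>i. if i \<le> n then \<xi> i else \<eta> (i - n)"] exI[of _ "n + m"]) auto
qed

lemma ap_pseudoorbit_orbit:
  assumes "x \<in> M" "F ` M \<subseteq> M" "F ` M0 \<subseteq> M0" "\<delta> > 0" "1 \<le> n"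
  shows "ap_pseudoorbit M M0 F \<delta> (\<lambda>i. (F ^^ i) x) n"
proof -
  have "(F ^^ i) x \<in> M" for i by (induction i) (use assms in auto)
  then show ?thesis using assms unfolding ap_pseudoorbit_def by (auto simp: dmax_self)
qed

lemma ap_pseudoorbit_replace_ends:
  assumes \<zeta>: "ap_pseudoorbit M M0 F \<delta> \<zeta> L" and "x \<in> M" "y \<in> M"
    and start: "dmax (F (\<zeta> 0)) (F x) \<le> e" and finish: "dmax y (\<zeta> L) \<le> e"
    and "x \<in> M0 \<Longrightarrow> \<zeta> 0 \<in> M0" and "\<zeta> L \<in> M0 \<Longrightarrow> y \<in> M0"
  shows "ap_pseudoorbit M M0 F (\<delta> + 2 * e) (\<lambda>i. if i = 0 then x else if i = L then y else \<zeta> i) L"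
  unfolding ap_pseudoorbit_def
proof (intro conjI allI impI)
  let ?\<omega> = "\<lambda>i. if i = 0 then x else if i = L then y else \<zeta> i"
  have L: "1 \<le> L" using \<zeta> unfolding ap_pseudoorbit_def by simp
  have e: "0 \<le> e" using start dmax_nonneg order_trans by blast
  show "1 \<le> L" by (rule L)
  show "?\<omega> i \<in> M" if "i \<le> L" for i
    using that \<zeta> assms(2,3) unfolding ap_pseudoorbit_def by auto
  show "?\<omega> (Suc i) \<in> M0" if "i < L" "?\<omega> i \<in> M0" for i
    using that \<zeta> assms(6,7) L unfolding ap_pseudoorbit_def by (auto split: if_splits)
  show "dmax (?\<omega> (Suc i)) (F (?\<omega> i)) < \<delta> + 2 * e" if "i < L" for i
  proof -
    have "dmax (?\<omega> (Suc i)) (\<zeta> (Suc i)) \<le> e"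
      using finish dmax_self[of "\<zeta> (Suc i)"] e by auto
    moreover have "dmax (F (\<zeta> i)) (F (?\<omega> i)) \<le> e"
      using start dmax_self[of "F (\<zeta> i)"] e that by auto
    moreover have "dmax (\<zeta> (Suc i)) (F (\<zeta> i)) < \<delta>"
      using \<zeta> that unfolding ap_pseudoorbit_def by blast
    ultimately show ?thesis
      using dmax_triangle[of "?\<omega> (Suc i)" "F (?\<omega> i)" "\<zeta> (Suc i)"]
        dmax_triangle[of "\<zeta> (Suc i)" "F (?\<omega> i)" "F (\<zeta> i)"] by linarith
  qed
qed

lemma ap_pseudoorbit_norm_bound:
  fixes \<xi> :: "nat \<Rightarrow> real^'n"
  assumes "ap_pseudoorbit M M0 F \<delta> \<xi> n" "1 \<le> j" "j \<le> n" "\<And>q. q \<in> M \<Longrightarrow> norm (F q) \<le> B"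
  shows "norm (\<xi> j) \<le> B + real CARD('n) * \<delta>"
proof -
  obtain i where i: "j = Suc i" using assms(2) by (cases j) auto
  have "\<xi> i \<in> M" "dmax (\<xi> j) (F (\<xi> i)) < \<delta>"
    using assms(1,3) i unfolding ap_pseudoorbit_def by auto
  then show ?thesis
    using norm_le_of_dmax_less norm_triangle_ineq2[of "\<xi> j" "F (\<xi> i)"] assms(4) by fastforce
qed

lemma ap_less_bound:
  assumes "ap_less M M0 F x p" "\<And>q. q \<in> M \<Longrightarrow> norm (F q) \<le> B"
  shows "norm p \<le> B"
proof (rule field_le_epsilon)
  fix e :: real assume e: "e > 0"
  define c where "c = real CARD('a)"
  have c: "c > 0" unfolding c_def by simp
  obtain \<xi> n where po: "ap_pseudoorbit M M0 F (e / c) \<xi> n" "\<xi> n = p"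
    using assms(1) e c unfolding ap_less_def by (meson divide_pos_pos)
  have "1 \<le> n" using po unfolding ap_pseudoorbit_def by simp
  then have "norm p \<le> B + c * (e / c)"
    using ap_pseudoorbit_norm_bound[OF po(1) _ order_refl assms(2)] po(2) unfolding c_def by auto
  then show "norm p \<le> B + e" using c by simp
qed

lemma R_ap_bound:
  assumes "p \<in> R_ap M M0 F" "\<And>q. q \<in> M \<Longrightarrow> norm (F q) \<le> B"
  shows "norm p \<le> B"
  using assms ap_less_bound unfolding R_ap_def ap_equiv_def by blast

lemma ap_basic_class_props:
  assumes "ap_basic_class M M0 F K"
  shows "K \<noteq> {}" "K \<subseteq> R_ap M M0 F" "K \<subseteq> M"
    and "\<And>x y. x \<in> K \<Longrightarrow> y \<in> K \<Longrightarrow> ap_less M M0 F x y"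
    and "\<And>x y. x \<in> K \<Longrightarrow> y \<in> M \<Longrightarrow> ap_less M M0 F x y \<Longrightarrow> ap_less M M0 F y x \<Longrightarrow> y \<in> K"
proof -
  obtain r where r: "r \<in> R_ap M M0 F" "K = {y \<in> R_ap M M0 F. ap_equiv M M0 F r y}"
    using assms unfolding ap_basic_class_def by blast
  then show "K \<noteq> {}" unfolding R_ap_def by auto
  show "K \<subseteq> R_ap M M0 F" using r by auto
  then show "K \<subseteq> M" unfolding R_ap_def by auto
  show "ap_less M M0 F x y" if "x \<in> K" "y \<in> K" for x y
    using that r ap_less_trans unfolding ap_equiv_def by blast
  show "y \<in> K" if "x \<in> K" "y \<in> M" "ap_less M M0 F x y" "ap_less M M0 F y x" for x y
    using that r ap_less_trans[of M M0 F _ x y] ap_less_trans[of M M0 F y x]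
    unfolding R_ap_def ap_equiv_def by blast
qed

subsection \<open>Limits of pseudoorbits with vanishing precision\<close>

locale ap_dynamics =
  fixes M M0 :: "(real^'n) set" and F :: "real^'n \<Rightarrow> real^'n"
  assumes closed_M: "closed M" and F_maps: "F ` M \<subseteq> M" and cont: "continuous_on M F"
    and bounded_F: "bounded (F ` M)" and closed_M0: "closed M0" and M0_invariant: "F ` M0 \<subseteq> M0"
begin

lemma funpow_in_M: "x \<in> M \<Longrightarrow> (F ^^ i) x \<in> M"
  by (induction i) (use F_maps in auto)

text \<open>The key limit principle: if segments \<open>[a\<^sub>k, b\<^sub>k]\<close> of \<open>\<delta>\<^sub>k\<close>-pseudoorbits, \<open>\<delta>\<^sub>k \<rightarrow> 0\<close>,
  start near \<open>x\<close> and end near \<open>y\<close>, then \<open>x <\<^sub>a\<^sub>p y\<close>: for a given precision take one segment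
  with \<open>k\<close> large and replace its endpoints by \<open>x\<close> and \<open>y\<close> (continuity of \<open>F\<close> at \<open>x\<close>
  controls the first step).\<close>

lemma ap_less_of_converging_segments:
  assumes po: "\<And>k. ap_pseudoorbit M M0 F (\<delta> k) (\<xi> k) (n k)" and "\<delta> \<longlonglongrightarrow> 0"
    and ab: "\<And>k. a k < b k" "\<And>k. b k \<le> n k"
    and xl: "(\<lambda>k. \<xi> k (a k)) \<longlonglongrightarrow> x" and yl: "(\<lambda>k. \<xi> k (b k)) \<longlonglongrightarrow> y"
    and "x \<in> M" "y \<in> M"
    and enter: "\<And>k. x \<in> M0 \<Longrightarrow> \<xi> k (a k) \<in> M0" and leave: "\<And>k. \<xi> k (b k) \<in> M0 \<Longrightarrow> y \<in> M0"
  shows "ap_less M M0 F x y"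
  unfolding ap_less_def
proof (intro allI impI)
  fix \<epsilon> :: real assume "\<epsilon> > 0"
  define e where "e = \<epsilon> / 3"
  have "e > 0" using \<open>\<epsilon> > 0\<close> by (simp add: e_def)
  obtain \<eta> where "\<eta> > 0" and \<eta>: "\<And>p. p \<in> M \<Longrightarrow> dist p x < \<eta> \<Longrightarrow> dist (F p) (F x) < e"
    using cont \<open>x \<in> M\<close> \<open>e > 0\<close> unfolding continuous_on_iff by metis
  have "eventually (\<lambda>k. dist (\<delta> k) 0 < e \<and> dist (\<xi> k (a k)) x < \<eta> \<and> dist (\<xi> k (b k)) y < e)
      sequentially"
    using assms(2) xl yl \<open>e > 0\<close> \<open>\<eta> > 0\<close> by (intro eventually_conj tendstoD)
  then obtain k where k: "\<delta> k < e" "dist (\<xi> k (a k)) x < \<eta>" "dist (\<xi> k (b k)) y < e"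
    using eventually_happens'[OF sequentially_bot] by force
  define L where "L = b k - a k"
  define \<zeta> where "\<zeta> i = \<xi> k (a k + i)" for i
  have \<zeta>: "ap_pseudoorbit M M0 F (\<delta> k) \<zeta> L"
    unfolding \<zeta>_def L_def by (rule ap_pseudoorbit_segment[OF po ab])
  have "\<zeta> 0 \<in> M" using po[of k] ab[of k] unfolding \<zeta>_def ap_pseudoorbit_def by simp
  then have "dist (F (\<zeta> 0)) (F x) < e" using \<eta> k(2) unfolding \<zeta>_def by simp
  then have "dmax (F (\<zeta> 0)) (F x) \<le> e"
    using dmax_le_norm[of "F (\<zeta> 0)" "F x"] by (simp add: dist_norm)
  moreover have "\<zeta> L = \<xi> k (b k)" using ab[of k] unfolding \<zeta>_def L_def by simp
  then have "dmax y (\<zeta> L) \<le> e"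
    using k(3) dmax_le_norm[of "\<zeta> L" y] dmax_sym[of y] by (simp add: dist_norm)
  ultimately have "ap_pseudoorbit M M0 F (\<delta> k + 2 * e)
      (\<lambda>i. if i = 0 then x else if i = L then y else \<zeta> i) L"
    using ap_pseudoorbit_replace_ends[OF \<zeta> \<open>x \<in> M\<close> \<open>y \<in> M\<close>] enter leave \<open>\<zeta> L = \<xi> k (b k)\<close>
    unfolding \<zeta>_def by simp
  moreover have "\<delta> k + 2 * e \<le> \<epsilon>" using k(1) unfolding e_def by simp
  moreover have "L \<noteq> 0" using ab[of k] unfolding L_def by simp
  ultimately show "\<exists>\<omega> L. ap_pseudoorbit M M0 F \<epsilon> \<omega> L \<and> \<omega> 0 = x \<and> \<omega> L = y"
    by (intro exI[of _ "\<lambda>i. if i = 0 then x else if i = L then y else \<zeta> i"] exI[of _ L] conjI)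
      (auto intro: ap_pseudoorbit_mono)
qed

lemma pseudoorbit_limit_step:
  assumes po: "\<And>k. ap_pseudoorbit M M0 F (\<delta> k) (\<xi> k) (n k)" and "\<delta> \<longlonglongrightarrow> 0"
    and lim: "(\<lambda>k. \<xi> k (a k)) \<longlonglongrightarrow> x" and "x \<in> M"
    and inside: "eventually (\<lambda>k. a k < n k) sequentially"
  shows "(\<lambda>k. \<xi> k (Suc (a k))) \<longlonglongrightarrow> F x"
proof (rule tendsto_of_dmax_close)
  show "(\<lambda>k. F (\<xi> k (a k))) \<longlonglongrightarrow> F x"
  proof (rule continuous_on_tendsto_compose[OF cont lim \<open>x \<in> M\<close>])
    show "eventually (\<lambda>k. \<xi> k (a k) \<in> M) sequentially"
      by (rule eventually_mono[OF inside]) (use po in \<open>auto simp: ap_pseudoorbit_def\<close>)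
  qed
  show "eventually (\<lambda>k. dmax (\<xi> k (Suc (a k))) (F (\<xi> k (a k))) \<le> \<delta> k) sequentially"
    by (rule eventually_mono[OF inside]) (use po in \<open>auto simp: ap_pseudoorbit_def less_imp_le\<close>)
qed fact

lemma pseudoorbit_limit_iterate:
  assumes po: "\<And>k. ap_pseudoorbit M M0 F (\<delta> k) (\<xi> k) (n k)" and "\<delta> \<longlonglongrightarrow> 0"
    and lim: "(\<lambda>k. \<xi> k (a k)) \<longlonglongrightarrow> x" and "x \<in> M"
  shows "eventually (\<lambda>k. a k + i \<le> n k) sequentially \<Longrightarrow> (\<lambda>k. \<xi> k (a k + i)) \<longlonglongrightarrow> (F ^^ i) x"
proof (induction i)
  case 0
  then show ?case using lim by simp
next
  case (Suc i)
  have "eventually (\<lambda>k. a k + i \<le> n k) sequentially"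
    by (rule eventually_mono[OF Suc.prems]) simp
  then have "(\<lambda>k. \<xi> k (a k + i)) \<longlonglongrightarrow> (F ^^ i) x"
    by (rule Suc.IH)
  moreover have "eventually (\<lambda>k. a k + i < n k) sequentially"
    by (rule eventually_mono[OF Suc.prems]) simp
  ultimately show ?case
    using pseudoorbit_limit_step[OF po assms(2) _ funpow_in_M[OF \<open>x \<in> M\<close>]] by simp
qed

text \<open>Version of the limit principle for endpoints that only approach compact sets \<open>K\<close> and
  \<open>K'\<close> outside \<open>M\<^sub>0\<close>: after passing to a subsequence the endpoints converge, so some point of
  \<open>K\<close> is \<open><\<^sub>a\<^sub>p\<close> some point of \<open>K'\<close>.\<close>

lemma ap_less_between_compacts:
  assumes "compact K" "compact K'" "K \<subseteq> M - M0" "K' \<subseteq> M - M0"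
    and po: "\<And>k. ap_pseudoorbit M M0 F (\<delta> k) (\<xi> k) (n k)" and "\<delta> \<longlonglongrightarrow> 0"
    and ab: "\<And>k. a k < b k" "\<And>k. b k \<le> n k" and leave: "\<And>k. \<xi> k (b k) \<notin> M0"
    and "e \<longlonglongrightarrow> 0"
    and near: "\<And>k. \<exists>q\<in>K. dmax (\<xi> k (a k)) q \<le> e k" "\<And>k. \<exists>q\<in>K'. dmax (\<xi> k (b k)) q \<le> e k"
  shows "\<exists>x\<in>K. \<exists>x'\<in>K'. ap_less M M0 F x x'"
proof -
  obtain X X' where X: "\<And>k. X k \<in> K" "\<And>k. dmax (\<xi> k (a k)) (X k) \<le> e k"
    and X': "\<And>k. X' k \<in> K'" "\<And>k. dmax (\<xi> k (b k)) (X' k) \<le> e k"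
    using near by metis
  have "\<forall>k. (X k, X' k) \<in> K \<times> K'" using X X' by simp
  from seq_compactE[OF compact_imp_seq_compact[OF compact_Times[OF assms(1,2)]] this]
  obtain l r where "l \<in> K \<times> K'" "strict_mono r" and lim: "((\<lambda>k. (X k, X' k)) \<circ> r) \<longlonglongrightarrow> l" .
  obtain x x' where l: "l = (x, x')" "x \<in> K" "x' \<in> K'" using \<open>l \<in> K \<times> K'\<close> by auto
  have er: "(e \<circ> r) \<longlonglongrightarrow> 0" and \<delta>r: "(\<delta> \<circ> r) \<longlonglongrightarrow> 0"
    using LIMSEQ_subseq_LIMSEQ[OF _ \<open>strict_mono r\<close>] assms(6,10) by auto
  have Xr: "(\<lambda>k. X (r k)) \<longlonglongrightarrow> x" and X'r: "(\<lambda>k. X' (r k)) \<longlonglongrightarrow> x'"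
    using tendsto_fst[OF lim] tendsto_snd[OF lim] by (simp_all add: l comp_def)
  have "(\<lambda>k. \<xi> (r k) (a (r k))) \<longlonglongrightarrow> x"
    by (rule tendsto_of_dmax_close[OF Xr er[unfolded comp_def]]) (simp add: X(2))
  moreover have "(\<lambda>k. \<xi> (r k) (b (r k))) \<longlonglongrightarrow> x'"
    by (rule tendsto_of_dmax_close[OF X'r er[unfolded comp_def]]) (simp add: X'(2))
  moreover have "x \<in> M" "x' \<in> M" "x \<notin> M0" using l assms(3,4) by auto
  ultimately have "ap_less M M0 F x x'"
    using ap_less_of_converging_segments[OF po \<delta>r[unfolded comp_def] ab, of x x'] leave by blast
  then show ?thesis using l by blast
qed

subsection \<open>Recurrent points in compact invariant sets and part (b)\<close>

text \<open>Every nonempty compact \<open>F\<close>-invariant set contains an ap-recurrent point: an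
  \<open>\<omega>\<close>-limit point of an orbit in it (chosen in \<open>M\<^sub>0\<close> if possible, to respect the
  \<open>M\<^sub>0\<close>-condition) is reached from itself along orbit segments.\<close>

lemma compact_invariant_meets_R_ap:
  assumes "compact A" "A \<noteq> {}" "A \<subseteq> M" "F ` A \<subseteq> A"
  shows "A \<inter> R_ap M M0 F \<noteq> {}"
proof -
  obtain x0 where x0: "x0 \<in> A" "A \<inter> M0 \<noteq> {} \<Longrightarrow> x0 \<in> M0" using assms(2) by blast
  define orb where "orb i = (F ^^ i) x0" for i
  have orb_A: "orb i \<in> A" for i unfolding orb_def by (induction i) (use x0 assms(4) in auto)
  have orb_M0: "orb i \<in> M0" if "x0 \<in> M0" for i
    unfolding orb_def by (induction i) (use that M0_invariant in auto)
  from seq_compactE[OF compact_imp_seq_compact[OF assms(1)]] orb_A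
  obtain w r where "w \<in> A" "strict_mono r" and lim: "(orb \<circ> r) \<longlonglongrightarrow> w" by metis
  have "w \<in> M" using \<open>w \<in> A\<close> assms(3) by blast
  have "ap_less M M0 F w w"
  proof (rule ap_less_of_converging_segments[where \<xi>="\<lambda>k. orb" and n="\<lambda>k. r (Suc k)"
        and \<delta>="\<lambda>k. inverse (real (Suc k))" and a=r and b="\<lambda>k. r (Suc k)"])
    show "ap_pseudoorbit M M0 F (inverse (real (Suc k))) orb (r (Suc k))" for k
      unfolding orb_def using x0(1) assms(3) seq_suble[OF \<open>strict_mono r\<close>, of "Suc k"]
      by (intro ap_pseudoorbit_orbit F_maps M0_invariant) auto
    show "(\<lambda>k. inverse (real (Suc k))) \<longlonglongrightarrow> 0" by (rule LIMSEQ_inverse_real_of_nat)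
    show "r k < r (Suc k)" for k using \<open>strict_mono r\<close> by (simp add: strict_mono_Suc_iff)
    show "(\<lambda>k. orb (r k)) \<longlonglongrightarrow> w" using lim by (simp add: comp_def)
    then show "(\<lambda>k. orb (r (Suc k))) \<longlonglongrightarrow> w" by (rule LIMSEQ_Suc)
    show "orb (r k) \<in> M0" if "w \<in> M0" for k
    proof -
      have "A \<inter> M0 \<noteq> {}" using that \<open>w \<in> A\<close> by blast
      then show ?thesis using x0(2) orb_M0 by blast
    qed
    show "w \<in> M0" if "orb (r (Suc k)) \<in> M0" for k
    proof -
      have "A \<inter> M0 \<noteq> {}" using that orb_A by blast
      then have "x0 \<in> M0" by (rule x0(2))
      then have "eventually (\<lambda>k. (orb \<circ> r) k \<in> M0) sequentially" using orb_M0 by simp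
      then show ?thesis by (rule Lim_in_closed_set[OF closed_M0 _ sequentially_bot lim])
    qed
  qed (use \<open>w \<in> M\<close> in auto)
  then have "w \<in> R_ap M M0 F" using \<open>w \<in> M\<close> unfolding R_ap_def ap_equiv_def by simp
  then show ?thesis using \<open>w \<in> A\<close> by blast
qed

text \<open>Applied to the closure of an orbit: a compact set containing a whole forward orbit
  meets \<open>R\<^sub>a\<^sub>p\<close>.\<close>

lemma orbit_in_compact_meets_R_ap:
  assumes "compact S" "S \<subseteq> M" and orbit: "\<And>i. (F ^^ i) x \<in> S"
  shows "S \<inter> R_ap M M0 F \<noteq> {}"
proof -
  define Orb where "Orb = range (\<lambda>i. (F ^^ i) x)"
  have "Orb \<subseteq> S" using orbit unfolding Orb_def by blast
  then have "closure Orb \<subseteq> S" by (rule closure_minimal[OF _ compact_imp_closed[OF assms(1)]])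
  have "F ` Orb \<subseteq> Orb"
  proof
    fix y assume "y \<in> F ` Orb"
    then obtain i where "y = F ((F ^^ i) x)" unfolding Orb_def by blast
    then have "y = (F ^^ Suc i) x" by simp
    then show "y \<in> Orb" unfolding Orb_def by blast
  qed
  moreover have "continuous_on (closure Orb) F"
    using continuous_on_subset[OF cont] \<open>closure Orb \<subseteq> S\<close> assms(2) by blast
  ultimately have "F ` closure Orb \<subseteq> closure Orb"
    using image_closure_subset[of Orb F "closure Orb"] closure_subset[of Orb] by auto
  moreover have "compact (closure Orb)"
    using bounded_subset[OF compact_imp_bounded[OF assms(1)] \<open>Orb \<subseteq> S\<close>] by simp
  moreover have "closure Orb \<noteq> {}" unfolding Orb_def by simp
  ultimately have "closure Orb \<inter> R_ap M M0 F \<noteq> {}"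
    using compact_invariant_meets_R_ap \<open>closure Orb \<subseteq> S\<close> assms(2) by blast
  then show ?thesis using \<open>closure Orb \<subseteq> S\<close> by blast
qed

text \<open>Arbitrarily long pseudoorbits with vanishing precision inside a compact set \<open>S\<close>
  produce an orbit inside \<open>S\<close>: take a limit \<open>w\<close> of their midpoints; the orbit of \<open>w\<close> is
  shadowed by the pseudoorbits after the midpoint.\<close>

lemma orbit_from_long_pseudoorbits:
  assumes "compact S" "S \<subseteq> M"
    and po: "\<And>k. ap_pseudoorbit M M0 F (\<delta> k) (\<xi> k) (n k)" and "\<delta> \<longlonglongrightarrow> 0"
    and long: "\<And>k. 2 * k + 2 < n k" and in_S: "\<And>k j. 1 \<le> j \<Longrightarrow> j \<le> n k \<Longrightarrow> \<xi> k j \<in> S"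
  shows "\<exists>w. \<forall>i. (F ^^ i) w \<in> S"
proof -
  define m where "m k = n k div 2" for k
  have m: "k + 1 \<le> m k" "m k + m k \<le> n k" for k using long[of k] unfolding m_def by auto
  have mid: "\<xi> k (m k) \<in> S" for k using m[of k] by (intro in_S) auto
  obtain w r where "w \<in> S" "strict_mono r" and lim: "((\<lambda>k. \<xi> k (m k)) \<circ> r) \<longlonglongrightarrow> w"
    using seq_compactE[OF compact_imp_seq_compact[OF \<open>compact S\<close>], of "\<lambda>k. \<xi> k (m k)"] mid by blast
  have po_r: "ap_pseudoorbit M M0 F (\<delta> (r k)) (\<xi> (r k)) (n (r k))" for k by (rule po)
  have \<delta>_r: "(\<lambda>k. \<delta> (r k)) \<longlonglongrightarrow> 0"
    using LIMSEQ_subseq_LIMSEQ[OF \<open>\<delta> \<longlonglongrightarrow> 0\<close> \<open>strict_mono r\<close>] by (simp add: comp_def)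
  have "w \<in> M" using \<open>w \<in> S\<close> \<open>S \<subseteq> M\<close> by blast
  have "(F ^^ i) w \<in> S" for i
  proof (rule Lim_in_closed_set[OF compact_imp_closed[OF \<open>compact S\<close>] _ sequentially_bot])
    have deep: "eventually (\<lambda>k. m (r k) + i \<le> n (r k)) sequentially"
      using eventually_ge_at_top[of i]
    proof (rule eventually_mono)
      fix k assume "i \<le> k"
      then show "m (r k) + i \<le> n (r k)" using m[of "r k"] seq_suble[OF \<open>strict_mono r\<close>, of k] by linarith
    qed
    show "eventually (\<lambda>k. \<xi> (r k) (m (r k) + i) \<in> S) sequentially"
    proof (rule eventually_mono[OF deep])
      fix k assume "m (r k) + i \<le> n (r k)"
      moreover have "1 \<le> m (r k) + i" using m(1)[of "r k"] by simp
      ultimately show "\<xi> (r k) (m (r k) + i) \<in> S" by (rule in_S[rotated])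
    qed
    show "(\<lambda>k. \<xi> (r k) (m (r k) + i)) \<longlonglongrightarrow> (F ^^ i) w"
      using pseudoorbit_limit_iterate[OF po_r \<delta>_r lim[unfolded comp_def] \<open>w \<in> M\<close> deep] .
  qed
  then show ?thesis by blast
qed

text \<open>Hence pseudoorbits with vanishing precision that avoid \<open>N\<^sup>\<delta>'(R\<^sub>a\<^sub>p)\<close> cannot be
  arbitrarily long: they would stay in the compact set \<open>S\<close> of points of \<open>M\<close> near \<open>F(M)\<close>
  and \<open>\<delta>'\<close>-far from \<open>R\<^sub>a\<^sub>p\<close>, which would then meet \<open>R\<^sub>a\<^sub>p\<close>.\<close>

lemma avoiding_pseudoorbits_are_short:
  assumes "\<delta>' > 0"
    and po: "\<And>k. ap_pseudoorbit M M0 F (\<delta> k) (\<xi> k) (n k)" and "\<delta> \<longlonglongrightarrow> 0" and \<delta>_less: "\<And>k. \<delta> k < \<delta>'"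
    and long: "\<And>k. 2 * k + 2 < n k" and far: "\<And>k j. j \<le> n k \<Longrightarrow> \<xi> k j \<notin> nbhd M \<delta>' (R_ap M M0 F)"
  shows False
proof -
  define R where "R = R_ap M M0 F"
  obtain B where B: "\<And>q. q \<in> M \<Longrightarrow> norm (F q) \<le> B"
    using bounded_F unfolding bounded_iff by blast
  define S where "S = M \<inter> cball 0 (B + real CARD('n) * \<delta>') \<inter> (\<Inter>y\<in>R. - ball y \<delta>')"
  have "compact S" unfolding compact_eq_bounded_closed
  proof
    show "bounded S" unfolding S_def by (rule bounded_subset[OF bounded_cball]) auto
    show "closed S" unfolding S_def using closed_M by (intro closed_Int closed_INT closed_Compl) auto
  qed
  have "S \<subseteq> M" "S \<inter> R = {}" unfolding S_def using assms(1) by force+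
  have in_S: "\<xi> k j \<in> S" if "1 \<le> j" "j \<le> n k" for k j
  proof -
    have "norm (\<xi> k j) \<le> B + real CARD('n) * \<delta> k"
      using ap_pseudoorbit_norm_bound[OF po that B] .
    also have "\<dots> \<le> B + real CARD('n) * \<delta>'" using \<delta>_less[of k] by simp
    finally show ?thesis
      using far[OF that(2)] po[of k] that(2)
      unfolding S_def R_def nbhd_def ap_pseudoorbit_def by (auto simp: dist_norm norm_minus_commute)
  qed
  obtain w where "\<And>i. (F ^^ i) w \<in> S"
    using orbit_from_long_pseudoorbits[OF \<open>compact S\<close> \<open>S \<subseteq> M\<close> po assms(3) long in_S] by blast
  then have "S \<inter> R \<noteq> {}"
    unfolding R_def by (rule orbit_in_compact_meets_R_ap[OF \<open>compact S\<close> \<open>S \<subseteq> M\<close>])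
  with \<open>S \<inter> R = {}\<close> show False by simp
qed

lemma long_pseudoorbits_visit_R_ap:
  assumes "\<delta>' > 0"
  shows "\<exists>\<delta> n0. 0 < \<delta> \<and> \<delta> < \<delta>' \<and> 1 \<le> n0 \<and>
           (\<forall>\<xi> n. ap_pseudoorbit M M0 F \<delta> \<xi> n \<and> n > n0 \<longrightarrow>
              (\<exists>j\<le>n. \<xi> j \<in> nbhd M \<delta>' (R_ap M M0 F)))"
proof (rule ccontr)
  assume contra: "\<not> ?thesis"
  define \<delta> where "\<delta> k = \<delta>' / 2 * inverse (real (Suc k))" for k
  have \<delta>: "0 < \<delta> k" "\<delta> k < \<delta>'" "\<delta> \<longlonglongrightarrow> 0" for k
    using shrinking_sequence(1,2)[of \<delta>' k] shrinking_sequence(3)[of \<delta>'] assms unfolding \<delta>_def by auto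
  have "\<forall>k::nat. \<exists>\<xi> n. ap_pseudoorbit M M0 F (\<delta> k) \<xi> n \<and> n > 2 * k + 2 \<and>
      (\<forall>j\<le>n. \<xi> j \<notin> nbhd M \<delta>' (R_ap M M0 F))"
  proof
    fix k :: nat
    have "1 \<le> 2 * k + 2" by simp
    then show "\<exists>\<xi> n. ap_pseudoorbit M M0 F (\<delta> k) \<xi> n \<and> n > 2 * k + 2 \<and>
        (\<forall>j\<le>n. \<xi> j \<notin> nbhd M \<delta>' (R_ap M M0 F))"
      using contra \<delta>(1,2)[of k] by blast
  qed
  then obtain \<xi> n where po: "\<And>k. ap_pseudoorbit M M0 F (\<delta> k) (\<xi> k) (n k)"
    and long: "\<And>k. n k > 2 * k + 2" and far: "\<And>k j. j \<le> n k \<Longrightarrow> \<xi> k j \<notin> nbhd M \<delta>' (R_ap M M0 F)"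
    by metis
  show False by (rule avoiding_pseudoorbits_are_short[OF assms po \<delta>(3) \<delta>(2) long far])
qed

end

subsection \<open>Excursions between basic classes: part (a)\<close>

context ap_dynamics
begin

lemma bounded_sequence_in_M_converges:
  assumes "\<And>k. p k \<in> M" "\<And>k. norm (p k) \<le> \<rho>"
  obtains z and r :: "nat \<Rightarrow> nat" where "z \<in> M" "strict_mono r" "(\<lambda>k. p (r k)) \<longlonglongrightarrow> z"
proof -
  have "compact (M \<inter> cball 0 \<rho>)" unfolding compact_eq_bounded_closed using closed_M by auto
  moreover have "\<forall>k. p k \<in> M \<inter> cball 0 \<rho>" using assms by simp
  ultimately obtain z and r :: "nat \<Rightarrow> nat" where "z \<in> M \<inter> cball 0 \<rho>" "strict_mono r" "(p \<circ> r) \<longlonglongrightarrow> z"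
    by (rule seq_compactE[OF compact_imp_seq_compact])
  then show ?thesis by (intro that[of z r]) (simp_all add: comp_def)
qed

text \<open>Closed ap-basic classes are compact, since recurrent points lie in the closure of
  the bounded set \<open>F(M)\<close>.\<close>

lemma ap_basic_class_compact:
  assumes "ap_basic_class M M0 F K" "closed K"
  shows "compact K"
proof -
  obtain B where "\<And>q. q \<in> M \<Longrightarrow> norm (F q) \<le> B"
    using bounded_F unfolding bounded_iff by blast
  then have "K \<subseteq> cball 0 B"
    using R_ap_bound ap_basic_class_props(2)[OF assms(1)] by fastforce
  then show ?thesis
    using assms(2) bounded_cball bounded_subset by (metis compact_eq_bounded_closed)
qed

end

locale ap_split_dynamics = ap_dynamics M M0 F
  for M M0 :: "(real^'n) set" and F :: "real^'n \<Rightarrow> real^'n" +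
  fixes M1 :: "(real^'n) set"
  assumes M_split: "M = M0 \<union> M1" and M0_M1_disjoint: "M0 \<inter> M1 = {}"
    and M1_invariant: "F ` M1 \<subseteq> M1"
begin

text \<open>The points just
  before the first exit accumulate at some \<open>z \<in> M\<^sub>1\<close> at distance \<open>\<le> \<theta>\<close> from \<open>K\<close>, so the
  first exit points accumulate at \<open>y = F z \<in> M\<^sub>1\<close>, which is at distance \<open>\<ge> \<theta>\<close> from \<open>K\<close>.\<close>

lemma excursion_limit_point:
  assumes "compact K" "K \<noteq> {}" and sep: "\<And>p. p \<in> M0 \<Longrightarrow> \<theta> < dset p K"
    and po: "\<And>k. ap_pseudoorbit M M0 F (\<delta> k) (\<xi> k) (n k)" and "\<delta> \<longlonglongrightarrow> 0" and \<delta>_\<theta>: "\<And>k. \<delta> k < \<theta>"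
    and start: "\<And>k. dset (\<xi> k 0) K < \<delta> k" and finish: "\<And>k. dset (\<xi> k (n k)) K < \<delta> k"
    and excursion: "\<And>k. \<exists>j\<in>{1..n k}. \<theta> < dset (\<xi> k j) K"
  shows "\<exists>r J y. strict_mono r \<and> (\<forall>k. 0 < J k \<and> J k < n (r k))
    \<and> (\<lambda>k. \<xi> (r k) (J k)) \<longlonglongrightarrow> y \<and> y \<in> M - M0 \<and> y \<notin> K"
proof -
  have "\<not> \<theta> < dset (\<xi> k 0) K" for k using start[of k] \<delta>_\<theta>[of k] by simp
  from first_exit_indices[where P="\<lambda>k j. \<theta> < dset (\<xi> k j) K", OF this excursion]
  obtain J where J_all: "\<forall>k. 0 < J k \<and> J k \<le> n k \<and> \<theta> < dset (\<xi> k (J k)) K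
      \<and> \<not> \<theta> < dset (\<xi> k (J k - 1)) K" by blast
  then have J: "\<And>k. 0 < J k" "\<And>k. J k \<le> n k" "\<And>k. \<theta> < dset (\<xi> k (J k)) K"
    and before: "\<And>k. dset (\<xi> k (J k - 1)) K \<le> \<theta>"
    by (simp_all add: not_less)
  have J_less: "J k < n k" for k
  proof -
    have "J k \<noteq> n k" using J(3)[of k] finish[of k] \<delta>_\<theta>[of k] by auto
    then show ?thesis using J(2)[of k] by simp
  qed
  obtain \<rho> where \<rho>: "\<And>p. dset p K \<le> \<theta> \<Longrightarrow> norm p \<le> \<rho>"
    using bounded_dset_neighbourhood[OF compact_imp_bounded[OF assms(1)] assms(2)] by blast
  have "\<xi> k (J k - 1) \<in> M" for k using po[of k] J(2)[of k] unfolding ap_pseudoorbit_def by simp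
  from bounded_sequence_in_M_converges[OF this \<rho>[OF before]]
  obtain z r where "z \<in> M" "strict_mono r" and lim: "(\<lambda>k. \<xi> (r k) (J (r k) - 1)) \<longlonglongrightarrow> z" .
  have "dset z K \<le> \<theta>"
    using before by (intro LIMSEQ_le_const2[OF tendsto_dset[OF assms(2) lim]]) auto
  then have "z \<notin> M0" using sep by force
  then have "z \<in> M1" using \<open>z \<in> M\<close> M_split by blast
  then have "F z \<in> M - M0" using M1_invariant M_split M0_M1_disjoint by blast
  have po_r: "ap_pseudoorbit M M0 F (\<delta> (r k)) (\<xi> (r k)) (n (r k))" for k by (rule po)
  have "(\<lambda>k. \<delta> (r k)) \<longlonglongrightarrow> 0"
    using LIMSEQ_subseq_LIMSEQ[OF \<open>\<delta> \<longlonglongrightarrow> 0\<close> \<open>strict_mono r\<close>] by (simp add: comp_def)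
  moreover have "eventually (\<lambda>k. J (r k) - 1 < n (r k)) sequentially"
    using J_less by (simp add: less_imp_diff_less)
  ultimately have lim_y: "(\<lambda>k. \<xi> (r k) (J (r k))) \<longlonglongrightarrow> F z"
    using pseudoorbit_limit_step[OF po_r _ lim \<open>z \<in> M\<close>] J(1) by simp
  have "\<theta> \<le> dset (F z) K"
    using J(3) by (intro LIMSEQ_le_const[OF tendsto_dset[OF assms(2) lim_y]]) (auto intro: less_imp_le)
  moreover have "0 < \<theta>"
    using start[of 0] \<delta>_\<theta>[of 0] dset_nonneg[OF assms(2), of "\<xi> 0 0"] by linarith
  ultimately have "F z \<notin> K" using dset_mem[of "F z" K] by force
  show ?thesis
    using \<open>strict_mono r\<close> J(1) J_less lim_y \<open>F z \<in> M - M0\<close> \<open>F z \<notin> K\<close>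
    by (intro exI[of _ r] exI[of _ "\<lambda>k. J (r k)"] exI[of _ "F z"]) auto
qed

text \<open>Such excursions cannot return to the same basic class: the exit limit \<open>y\<close> would
  satisfy \<open>K <\<^sub>a\<^sub>p y <\<^sub>a\<^sub>p K\<close> and hence belong to \<open>K\<close>.\<close>

lemma excursion_leaves_class:
  assumes K: "ap_basic_class M M0 F K" "compact K" "K \<subseteq> M1"
    and sep: "\<And>p. p \<in> M0 \<Longrightarrow> \<theta> < dset p K"
    and po: "\<And>k. ap_pseudoorbit M M0 F (\<delta> k) (\<xi> k) (n k)" and "\<delta> \<longlonglongrightarrow> 0" and \<delta>_\<theta>: "\<And>k. \<delta> k < \<theta>"
    and start: "\<And>k. dset (\<xi> k 0) K < \<delta> k" and finish: "\<And>k. dset (\<xi> k (n k)) K < \<delta> k"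
    and excursion: "\<And>k. \<exists>j\<in>{1..n k}. \<theta> < dset (\<xi> k j) K"
    and leave: "\<And>k. \<xi> k (n k) \<notin> M0"
  shows False
proof -
  have "K \<noteq> {}" "K \<subseteq> M - M0"
    using ap_basic_class_props(1,3)[OF K(1)] K(3) M0_M1_disjoint by auto
  obtain r J y where "strict_mono r" and J_all: "\<forall>k. 0 < J k \<and> J k < n (r k)"
    and lim_y: "(\<lambda>k. \<xi> (r k) (J k)) \<longlonglongrightarrow> y" and y: "y \<in> M - M0" "y \<notin> K"
    using excursion_limit_point[OF K(2) \<open>K \<noteq> {}\<close> sep po assms(6) \<delta>_\<theta> start finish excursion] by blast
  have J: "0 < J k" "J k < n (r k)" for k using J_all by auto
  have po_r: "ap_pseudoorbit M M0 F (\<delta> (r k)) (\<xi> (r k)) (n (r k))" for k by (rule po)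
  have \<delta>_r: "(\<lambda>k. \<delta> (r k)) \<longlonglongrightarrow> 0"
    using LIMSEQ_subseq_LIMSEQ[OF assms(6) \<open>strict_mono r\<close>] by (simp add: comp_def)
  define e where "e k = \<delta> (r k) + norm (\<xi> (r k) (J k) - y)" for k
  have "(\<lambda>k. norm (\<xi> (r k) (J k) - y)) \<longlonglongrightarrow> 0"
    using lim_y by (simp add: LIM_zero_iff tendsto_norm_zero)
  from tendsto_add[OF \<delta>_r this] have "e \<longlonglongrightarrow> 0" unfolding e_def by simp
  have \<delta>_nonneg: "0 \<le> \<delta> k" for k
    using start[of k] dset_nonneg[OF \<open>K \<noteq> {}\<close>, of "\<xi> k 0"] by linarith
  have near_K: "\<exists>q\<in>K. dmax p q \<le> e k" if close: "dset p K < \<delta> (r k)" for p k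
  proof -
    obtain q where "q \<in> K" "dmax p q < \<delta> (r k)" using dset_lessD[OF \<open>K \<noteq> {}\<close> close] by blast
    moreover have "\<delta> (r k) \<le> e k" unfolding e_def by simp
    ultimately show ?thesis by force
  qed
  have near_y: "\<exists>q\<in>{y}. dmax (\<xi> (r k) (J k)) q \<le> e k" for k
    using dmax_le_norm[of "\<xi> (r k) (J k)" y] \<delta>_nonneg[of "r k"] unfolding e_def by simp
  have leave_J: "\<xi> (r k) (J k) \<notin> M0" for k
    using ap_pseudoorbit_stays_in_M0[OF po_r[of k] _ _ order_refl, of "J k"] J(2)[of k] leave[of "r k"]
    by auto
  obtain x where "x \<in> K" "ap_less M M0 F x y"
    using ap_less_between_compacts[OF K(2) compact_sing \<open>K \<subseteq> M - M0\<close> _ po_r \<delta>_r J(1) less_imp_le[OF J(2)]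
        leave_J \<open>e \<longlonglongrightarrow> 0\<close> near_K[OF start] near_y] y(1) by blast
  moreover obtain x' where "x' \<in> K" "ap_less M M0 F y x'"
    using ap_less_between_compacts[OF compact_sing K(2) _ \<open>K \<subseteq> M - M0\<close> po_r \<delta>_r J(2) order_refl
        leave \<open>e \<longlonglongrightarrow> 0\<close> near_y near_K[OF finish]] y(1) by blast
  ultimately have "y \<in> K"
    using ap_basic_class_props(4,5)[OF K(1)] ap_less_trans y(1) by blast
  with y(2) show False by contradiction
qed

lemma converging_excursions_between_classes:
  assumes K: "ap_basic_class M M0 F K" "compact K" "K \<subseteq> M1"
    and K': "ap_basic_class M M0 F K'" "compact K'" "K' \<subseteq> M1"
    and sep: "\<And>p. p \<in> M0 \<Longrightarrow> \<theta> < dset p K" "\<And>p. p \<in> M0 \<Longrightarrow> \<theta> < dset p K'"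
    and po: "\<And>k. ap_pseudoorbit M M0 F (\<delta> k) (\<xi> k) (n k)" and "\<delta> \<longlonglongrightarrow> 0" and \<delta>_\<theta>: "\<And>k. \<delta> k < \<theta>"
    and start: "\<And>k. dset (\<xi> k 0) K < \<delta> k" and finish: "\<And>k. dset (\<xi> k (n k)) K' < \<delta> k"
    and excursion: "\<And>k. \<exists>j\<in>{1..n k}. \<theta> < dset (\<xi> k j) K"
  shows "K \<noteq> K' \<and> class_less M M0 F K K'"
proof
  have nonempty: "K \<noteq> {}" "K' \<noteq> {}"
    using ap_basic_class_props(1) K(1) K'(1) by auto
  have outside: "K \<subseteq> M - M0" "K' \<subseteq> M - M0"
    using ap_basic_class_props(3)[OF K(1)] ap_basic_class_props(3)[OF K'(1)] K(3) K'(3) M0_M1_disjoint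
    by auto
  have leave: "\<xi> k (n k) \<notin> M0" for k
    using sep(2)[of "\<xi> k (n k)"] finish[of k] \<delta>_\<theta>[of k] by force
  have near: "\<exists>q\<in>L. dmax p q \<le> \<delta> k" if "L \<noteq> {}" "dset p L < \<delta> k" for L p k
    using dset_lessD[OF that] by (auto intro: less_imp_le)
  have pos: "0 < n k" for k using po[of k] unfolding ap_pseudoorbit_def by simp
  obtain x x' where "x \<in> K" "x' \<in> K'" "ap_less M M0 F x x'"
    using ap_less_between_compacts[OF K(2) K'(2) outside po assms(10) pos order_refl leave assms(10)
        near[OF nonempty(1) start] near[OF nonempty(2) finish]] by blast
  show "class_less M M0 F K K'"
    unfolding class_less_def
  proof (intro ballI)
    fix u v assume "u \<in> K" "v \<in> K'"
    have "ap_less M M0 F u x"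
      using ap_basic_class_props(4)[OF K(1) \<open>u \<in> K\<close> \<open>x \<in> K\<close>] .
    moreover have "ap_less M M0 F x' v"
      using ap_basic_class_props(4)[OF K'(1) \<open>x' \<in> K'\<close> \<open>v \<in> K'\<close>] .
    ultimately show "ap_less M M0 F u v"
      using ap_less_trans \<open>ap_less M M0 F x x'\<close> by metis
  qed
  show "K \<noteq> K'"
  proof
    assume "K = K'"
    show False
      using excursion_leaves_class[OF K sep(1) po assms(10) \<delta>_\<theta> start
          finish[unfolded \<open>K = K'\<close>[symmetric]] excursion leave] .
  qed
qed

lemma classes_uniformly_separated:
  assumes finite_classes: "finite {K. ap_basic_class M M0 F K \<and> K \<subseteq> M1}"
    and closed_classes: "\<forall>K. ap_basic_class M M0 F K \<and> K \<subseteq> M1 \<longrightarrow> closed K"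
  shows "\<exists>\<theta>0>0. \<forall>K\<in>{K. ap_basic_class M M0 F K \<and> K \<subseteq> M1}. \<forall>p\<in>M0. \<theta>0 \<le> dset p K"
  using finite_classes
proof (rule finite_uniform_lower_bound)
  fix K assume "K \<in> {K. ap_basic_class M M0 F K \<and> K \<subseteq> M1}"
  then have K: "ap_basic_class M M0 F K" "K \<subseteq> M1" by auto
  then have "compact K" "K \<noteq> {}" "K \<inter> M0 = {}"
    using closed_classes ap_basic_class_compact[OF K(1)] ap_basic_class_props(1)[OF K(1)]
      M0_M1_disjoint by auto
  then show "\<exists>e>0. \<forall>p\<in>M0. e \<le> dset p K"
    using closed_M0 by (intro compact_dset_separated) auto
qed

text \<open>Otherwise there would be counterexamples with
  \<open>\<delta>\<^sub>k \<rightarrow> 0\<close>; along a subsequence they connect a fixed pair of classes, contradicting the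
  sequential form above.\<close>

lemma excursion_threshold:
  assumes "finite KK" and KK: "\<And>K. K \<in> KK \<Longrightarrow> ap_basic_class M M0 F K \<and> compact K \<and> K \<subseteq> M1"
    and sep: "\<And>K p. K \<in> KK \<Longrightarrow> p \<in> M0 \<Longrightarrow> \<theta> < dset p K" and "0 < \<theta>"
  shows "\<exists>\<delta>. 0 < \<delta> \<and> \<delta> < \<theta> \<and> (\<forall>K K' \<xi> n. K \<in> KK \<and> K' \<in> KK \<and> ap_pseudoorbit M M0 F \<delta> \<xi> n \<and>
      dset (\<xi> 0) K < \<delta> \<and> dset (\<xi> n) K' < \<delta> \<and> (\<exists>j\<in>{1..n}. \<theta> < dset (\<xi> j) K)
      \<longrightarrow> K \<noteq> K' \<and> class_less M M0 F K K')" (is "\<exists>\<delta>. ?good \<delta>")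
proof (rule ccontr)
  assume contra: "\<not> ?thesis"
  let ?bad = "\<lambda>\<delta> K K' \<xi> n. K \<in> KK \<and> K' \<in> KK \<and> ap_pseudoorbit M M0 F \<delta> \<xi> n \<and>
    dset (\<xi> 0) K < \<delta> \<and> dset (\<xi> n) K' < \<delta> \<and> (\<exists>j\<in>{1..n}. \<theta> < dset (\<xi> j) K) \<and>
    \<not> (K \<noteq> K' \<and> class_less M M0 F K K')"
  define \<delta> where "\<delta> k = \<theta> / 2 * inverse (real (Suc k))" for k
  have \<delta>: "0 < \<delta> k" "\<delta> k < \<theta>" "\<delta> \<longlonglongrightarrow> 0" for k
    using shrinking_sequence(1,2)[of \<theta> k] shrinking_sequence(3)[of \<theta>] \<open>0 < \<theta>\<close> unfolding \<delta>_def by auto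
  have "\<not> ?good (\<delta> k)" for k using contra by blast
  then have "\<forall>k. \<exists>K K' \<xi> n. ?bad (\<delta> k) K K' \<xi> n" using \<delta>(1,2) by fast
  then obtain Ks Ks' \<xi> n where bad: "\<And>k. ?bad (\<delta> k) (Ks k) (Ks' k) (\<xi> k) (n k)" by metis
  have pair: "(Ks k, Ks' k) \<in> KK \<times> KK" for k using bad[of k] by simp
  from subseq_constant[of "KK \<times> KK" "\<lambda>k. (Ks k, Ks' k)", OF _ pair] \<open>finite KK\<close>
  obtain s :: "nat \<Rightarrow> nat" and KK' where "strict_mono s" and const: "\<forall>k. (Ks (s k), Ks' (s k)) = KK'"
    by blast
  obtain K K' where "KK' = (K, K')" by (cases KK')
  with const have KsK: "Ks (s k) = K" "Ks' (s k) = K'" for k by simp_all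
  have "K \<in> KK" "K' \<in> KK" using bad[of "s 0"] KsK by auto
  have po_s: "ap_pseudoorbit M M0 F (\<delta> (s k)) (\<xi> (s k)) (n (s k))"
    and start: "dset (\<xi> (s k) 0) K < \<delta> (s k)" and finish: "dset (\<xi> (s k) (n (s k))) K' < \<delta> (s k)"
    and excursion: "\<exists>j\<in>{1..n (s k)}. \<theta> < dset (\<xi> (s k) j) K" for k
    using bad[of "s k"] KsK by auto
  have \<delta>_s: "(\<lambda>k. \<delta> (s k)) \<longlonglongrightarrow> 0"
    using LIMSEQ_subseq_LIMSEQ[OF \<delta>(3) \<open>strict_mono s\<close>] by (simp add: comp_def)
  have "K \<noteq> K' \<and> class_less M M0 F K K'"
    using KK[OF \<open>K \<in> KK\<close>] KK[OF \<open>K' \<in> KK\<close>]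
    by (intro converging_excursions_between_classes[OF _ _ _ _ _ _ sep[OF \<open>K \<in> KK\<close>] sep[OF \<open>K' \<in> KK\<close>]
          po_s \<delta>_s \<delta>(2) start finish excursion]) auto
  then show False using bad[of "s 0"] KsK by auto
qed

text \<open>Part (a) of the theorem: take \<open>\<theta>\<^sub>0\<close> to be the uniform separation of the classes in
  \<open>M\<^sub>1\<close> from \<open>M\<^sub>0\<close>.\<close>

lemma excursions_between_classes:
  assumes finite_classes: "finite {K. ap_basic_class M M0 F K \<and> K \<subseteq> M1}"
    and closed_classes: "\<forall>K. ap_basic_class M M0 F K \<and> K \<subseteq> M1 \<longrightarrow> closed K"
  shows "\<exists>\<theta>0>0. \<forall>\<theta>. 0 < \<theta> \<and> \<theta> < \<theta>0 \<longrightarrow>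
           (\<exists>\<delta>. 0 < \<delta> \<and> \<delta> < \<theta> \<and>
             (\<forall>K K' \<xi> n.
                ap_basic_class M M0 F K \<and> K \<subseteq> M1 \<and>
                ap_basic_class M M0 F K' \<and> K' \<subseteq> M1 \<and>
                ap_pseudoorbit M M0 F \<delta> \<xi> n \<and>
                dset (\<xi> 0) K < \<delta> \<and> dset (\<xi> n) K' < \<delta> \<and>
                (\<exists>j\<in>{1..n}. dset (\<xi> j) K > \<theta>)
                \<longrightarrow> K \<noteq> K' \<and> class_less M M0 F K K'))"
proof -
  define KK where "KK = {K. ap_basic_class M M0 F K \<and> K \<subseteq> M1}"
  have KK: "ap_basic_class M M0 F K \<and> compact K \<and> K \<subseteq> M1" if "K \<in> KK" for K
    using that closed_classes ap_basic_class_compact unfolding KK_def by auto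
  obtain \<theta>0 where "\<theta>0 > 0" and sep: "\<And>K p. K \<in> KK \<Longrightarrow> p \<in> M0 \<Longrightarrow> \<theta>0 \<le> dset p K"
    using classes_uniformly_separated[OF finite_classes closed_classes] unfolding KK_def by blast
  have "\<exists>\<delta>. 0 < \<delta> \<and> \<delta> < \<theta> \<and> (\<forall>K K' \<xi> n. K \<in> KK \<and> K' \<in> KK \<and> ap_pseudoorbit M M0 F \<delta> \<xi> n \<and>
      dset (\<xi> 0) K < \<delta> \<and> dset (\<xi> n) K' < \<delta> \<and> (\<exists>j\<in>{1..n}. \<theta> < dset (\<xi> j) K)
      \<longrightarrow> K \<noteq> K' \<and> class_less M M0 F K K')" if "0 < \<theta>" "\<theta> < \<theta>0" for \<theta>
    using finite_classes[folded KK_def] KK sep that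
    by (intro excursion_threshold) (auto intro: less_le_trans)
  then show ?thesis using \<open>\<theta>0 > 0\<close> unfolding KK_def by (intro exI[of _ \<theta>0]) auto
qed

end

theorem mainTheorem6:
  fixes M M0 M1 :: "(real^'n) set" and F :: "real^'n \<Rightarrow> real^'n"
  assumes "closed M"
    and "F ` M \<subseteq> M"
    and "continuous_on M F"
    and "bounded (F ` M)"
    and "M = M0 \<union> M1" and "M0 \<inter> M1 = {}"
    and "closed M0"
    and "F ` M0 \<subseteq> M0" and "F ` M1 \<subseteq> M1"
    and "finite {K. ap_basic_class M M0 F K \<and> K \<subseteq> M1}"
    and "\<forall>K. ap_basic_class M M0 F K \<and> K \<subseteq> M1 \<longrightarrow> closed K"
  shows "(\<exists>\<theta>0>0. \<forall>\<theta>. 0 < \<theta> \<and> \<theta> < \<theta>0 \<longrightarrow>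
            (\<exists>\<delta>. 0 < \<delta> \<and> \<delta> < \<theta> \<and>
              (\<forall>K K' \<xi> n.
                 ap_basic_class M M0 F K \<and> K \<subseteq> M1 \<and>
                 ap_basic_class M M0 F K' \<and> K' \<subseteq> M1 \<and>
                 ap_pseudoorbit M M0 F \<delta> \<xi> n \<and>
                 dset (\<xi> 0) K < \<delta> \<and> dset (\<xi> n) K' < \<delta> \<and>
                 (\<exists>j\<in>{1..n}. dset (\<xi> j) K > \<theta>)
                 \<longrightarrow> K \<noteq> K' \<and> class_less M M0 F K K')))
       \<and> (\<forall>\<delta>'>0. \<exists>\<delta> n0. 0 < \<delta> \<and> \<delta> < \<delta>' \<and> 1 \<le> n0 \<and>
            (\<forall>\<xi> n. ap_pseudoorbit M M0 F \<delta> \<xi> n \<and> n > n0 \<longrightarrow>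
               (\<exists>j\<le>n. \<xi> j \<in> nbhd M \<delta>' (R_ap M M0 F))))"
proof -
  interpret ap_split_dynamics M M0 F M1
    by unfold_locales (fact assms)+
  show ?thesis
    using excursions_between_classes[OF assms(10,11)] long_pseudoorbits_visit_R_ap by blast
qed

end
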